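(* Let $G$ be a connected cubic graph of order $n\geq 6$ with $\alpha(G)=\frac{3}{5}\,\mathrm{diss}(G)$. Then $n$ is divisible by $18$, $\alpha(G)=\frac{n}{3}$, $\mathrm{diss}(G)=\frac{5n}{9}$, and for every maximum dissociation set $D$ of $G$, every component of $G[D]$ has exactly two vertices (i.e. $G[D]$ has no isolated vertices).
   Context: All graphs are finite, simple and undirected. $\alpha(G)$ denotes the independence number of $G$. A set $D$ of vertices of $G$ is a dissociation set if the subgraph $G[D]$ induced by $D$ has maximum degree at most $1$; the dissociation number $\mathrm{diss}(G)$ is the maximum order of a dissociation set in $G$; a maximum dissociation set is a dissociation set of order $\mathrm{diss}(G)$. *)

theory Defs
  imports Main
begin

definition simple_graph :: "'a set \<Rightarrow> ('a \<Rightarrow> 'a \<Rightarrow> bool) \<Rightarrow> bool" where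
  "simple_graph V E \<longleftrightarrow> finite V \<and> (\<forall>x y. E x y \<longrightarrow> x \<in> V \<and> y \<in> V)
     \<and> (\<forall>x y. E x y \<longrightarrow> E y x) \<and> (\<forall>x. \<not> E x x)"

definition neighbors :: "'a set \<Rightarrow> ('a \<Rightarrow> 'a \<Rightarrow> bool) \<Rightarrow> 'a \<Rightarrow> 'a set" where
  "neighbors V E v = {u \<in> V. E v u}"

definition cubic :: "'a set \<Rightarrow> ('a \<Rightarrow> 'a \<Rightarrow> bool) \<Rightarrow> bool" where
  "cubic V E \<longleftrightarrow> (\<forall>v\<in>V. card (neighbors V E v) = 3)"

definition connected_graph :: "'a set \<Rightarrow> ('a \<Rightarrow> 'a \<Rightarrow> bool) \<Rightarrow> bool" where
  "connected_graph V E \<longleftrightarrow> V \<noteq> {} \<and>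
     (\<forall>u\<in>V. \<forall>v\<in>V. (\<lambda>x y. x \<in> V \<and> y \<in> V \<and> E x y)\<^sup>*\<^sup>* u v)"

definition independent_set :: "'a set \<Rightarrow> ('a \<Rightarrow> 'a \<Rightarrow> bool) \<Rightarrow> 'a set \<Rightarrow> bool" where
  "independent_set V E S \<longleftrightarrow> S \<subseteq> V \<and> (\<forall>x\<in>S. \<forall>y\<in>S. \<not> E x y)"

definition independence_number :: "'a set \<Rightarrow> ('a \<Rightarrow> 'a \<Rightarrow> bool) \<Rightarrow> nat" where
  "independence_number V E = Max (card ` {S. independent_set V E S})"

definition dissociation_set :: "'a set \<Rightarrow> ('a \<Rightarrow> 'a \<Rightarrow> bool) \<Rightarrow> 'a set \<Rightarrow> bool" where
  "dissociation_set V E D \<longleftrightarrow> D \<subseteq> V \<and> (\<forall>x\<in>D. card {y \<in> D. E x y} \<le> 1)"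

definition diss :: "'a set \<Rightarrow> ('a \<Rightarrow> 'a \<Rightarrow> bool) \<Rightarrow> nat" where
  "diss V E = Max (card ` {D. dissociation_set V E D})"

definition max_dissociation_set :: "'a set \<Rightarrow> ('a \<Rightarrow> 'a \<Rightarrow> bool) \<Rightarrow> 'a set \<Rightarrow> bool" where
  "max_dissociation_set V E D \<longleftrightarrow> dissociation_set V E D \<and> card D = diss V E"

end

theory Submission
  imports Defs
begin

(* A connected cubic graph other than K4 is 3-colourable (Brooks' theorem, proved below for
   cubic graphs), so alpha(G) >= n/3. Conversely, let D be a dissociation set, R = V - D and i the
   number of isolated vertices of G[D]. Exactly 2|D| + i edges join D to R, so G[R] has
   (3|R| - 2|D| - i)/2 edges, and deleting one end of each leaves an independent set; this gives
   3|D| + i <= 2 alpha(G) + n. When 5 alpha = 3 diss the two bounds meet: n = 3 alpha,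
   9 diss = 5n, and i = 0 for every maximum dissociation set. Finally n is even and 3 divides
   alpha, so 18 divides n. *)

section \<open>Closed sets and 3-colourings\<close>

definition sym_irrefl :: "('a \<Rightarrow> 'a \<Rightarrow> bool) \<Rightarrow> bool" where
  "sym_irrefl E \<longleftrightarrow> (\<forall>a b. E a b \<longrightarrow> E b a) \<and> (\<forall>a. \<not> E a a)"

definition adj_closed :: "'a set \<Rightarrow> ('a \<Rightarrow> 'a \<Rightarrow> bool) \<Rightarrow> 'a set \<Rightarrow> bool" where
  "adj_closed U E S \<longleftrightarrow> S \<subseteq> U \<and> (\<forall>s\<in>S. \<forall>u\<in>U. E s u \<longrightarrow> u \<in> S)"

text \<open>Unlike \<open>connected_graph\<close>, this is stated via closed sets instead of walks, and it holds
  for \<open>U = {}\<close>.\<close>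
definition connected_on :: "'a set \<Rightarrow> ('a \<Rightarrow> 'a \<Rightarrow> bool) \<Rightarrow> bool" where
  "connected_on U E \<longleftrightarrow> (\<forall>S. adj_closed U E S \<longrightarrow> S \<noteq> {} \<longrightarrow> S = U)"

lemma adj_closed_Diff:
  assumes "sym_irrefl E" "adj_closed U E S"
  shows "adj_closed U E (U - S)"
  using assms unfolding adj_closed_def sym_irrefl_def by blast

lemma adj_closed_hull:
  assumes "z \<in> W"
  shows "\<exists>K. adj_closed W E K \<and> z \<in> K \<and> (\<forall>S. adj_closed W E S \<longrightarrow> z \<in> S \<longrightarrow> K \<subseteq> S)"
proof (intro exI conjI allI impI)
  let ?K = "\<Inter>{S. adj_closed W E S \<and> z \<in> S}"
  have "adj_closed W E W" unfolding adj_closed_def by blast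
  then show "adj_closed W E ?K" using assms unfolding adj_closed_def by blast
  show "z \<in> ?K" by blast
  show "\<And>S. adj_closed W E S \<Longrightarrow> z \<in> S \<Longrightarrow> ?K \<subseteq> S" by blast
qed

lemma connected_on_if_hull_eq:
  assumes "sym_irrefl E" "z \<in> W" and hull: "\<And>S. adj_closed W E S \<Longrightarrow> z \<in> S \<Longrightarrow> W \<subseteq> S"
  shows "connected_on W E"
  unfolding connected_on_def
proof (intro allI impI)
  fix S assume S: "adj_closed W E S" "S \<noteq> {}"
  show "S = W"
  proof (cases "z \<in> S")
    case True
    then show ?thesis using hull S(1) unfolding adj_closed_def by blast
  next
    case False
    then have "W \<subseteq> W - S" using hull[OF adj_closed_Diff[OF assms(1) S(1)]] assms(2) by blast
    then show ?thesis using S unfolding adj_closed_def by blast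
  qed
qed

definition three_colouring :: "'a set \<Rightarrow> ('a \<Rightarrow> 'a \<Rightarrow> bool) \<Rightarrow> ('a \<Rightarrow> nat) \<Rightarrow> bool" where
  "three_colouring U E c \<longleftrightarrow> (\<forall>v\<in>U. c v < 3) \<and> (\<forall>u\<in>U. \<forall>v\<in>U. E u v \<longrightarrow> c u \<noteq> c v)"

definition is_K4 :: "('a \<Rightarrow> 'a \<Rightarrow> bool) \<Rightarrow> 'a set \<Rightarrow> bool" where
  "is_K4 E S \<longleftrightarrow> card S = 4 \<and> (\<forall>a\<in>S. \<forall>b\<in>S. a \<noteq> b \<longrightarrow> E a b)"

definition add_edge :: "('a \<Rightarrow> 'a \<Rightarrow> bool) \<Rightarrow> 'a \<Rightarrow> 'a \<Rightarrow> 'a \<Rightarrow> 'a \<Rightarrow> bool" where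
  "add_edge E x y a b \<longleftrightarrow> E a b \<or> (a = x \<and> b = y) \<or> (a = y \<and> b = x)"

lemma sym_irrefl_add_edge: "sym_irrefl E \<Longrightarrow> x \<noteq> y \<Longrightarrow> sym_irrefl (add_edge E x y)"
  unfolding sym_irrefl_def add_edge_def by auto

lemma add_edge_commute: "add_edge E y x = add_edge E x y"
  unfolding add_edge_def by fastforce

lemma three_colouring_add_edge:
  assumes "three_colouring U (add_edge E x y) c"
  shows "three_colouring U E c" and "x \<in> U \<Longrightarrow> y \<in> U \<Longrightarrow> c x \<noteq> c y"
  using assms unfolding three_colouring_def add_edge_def by auto

lemma free_colour:
  fixes F :: "nat set"
  assumes "finite F" "card F \<le> 2"
  shows "\<exists>k<3. k \<notin> F"
proof (rule ccontr)
  assume "\<not> ?thesis"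
  then have "{0,1,2} \<subseteq> F" by auto
  then have "card {0::nat,1,2} \<le> card F" using assms(1) by (rule card_mono[rotated])
  then show False using assms(2) by simp
qed

lemma three_colouring_insert:
  assumes c: "three_colouring U E c" and "sym_irrefl E" "w \<notin> U"
    and "finite F" "card F \<le> 2" "c ` neighbors U E w \<subseteq> F"
  shows "\<exists>k. three_colouring (insert w U) E (c(w := k))"
proof -
  obtain k where k: "k < 3" "k \<notin> F" using free_colour assms(4,5) by blast
  have sym: "\<And>a b. E a b \<Longrightarrow> E b a" and irr: "\<And>a. \<not> E a a"
    using assms(2) unfolding sym_irrefl_def by auto
  have blocked: "c v \<noteq> k" if "v \<in> U" "E w v" for v
    using that k(2) assms(6) unfolding neighbors_def by blast
  have "three_colouring (insert w U) E (c(w := k))"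
    unfolding three_colouring_def
  proof (intro conjI ballI impI)
    fix v assume "v \<in> insert w U"
    then show "(c(w := k)) v < 3" using c k(1) unfolding three_colouring_def by auto
  next
    fix u v assume uv: "u \<in> insert w U" "v \<in> insert w U" "E u v"
    then consider "u = w" "v \<in> U" | "v = w" "u \<in> U" | "u \<in> U" "v \<in> U" "u \<noteq> w" "v \<noteq> w"
      using irr by blast
    then show "(c(w := k)) u \<noteq> (c(w := k)) v"
    proof cases
      case 1 then show ?thesis using blocked[of v] uv(3) assms(3) by auto
    next
      case 2 then show ?thesis using blocked[of u] sym[OF uv(3)] assms(3) by auto
    next
      case 3 then show ?thesis using c uv(3) unfolding three_colouring_def by auto
    qed
  qed
  then show ?thesis by blast
qed

text \<open>The vertex \<open>w\<close> granted by the degeneracy hypothesis is coloured last, when at most two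
  colours are blocked at it.\<close>
lemma greedy_three_colouring:
  assumes "finite W" "finite P" "W \<inter> P = {}" "three_colouring P E c0" "sym_irrefl E"
    and degenerate: "\<And>S. S \<subseteq> W \<Longrightarrow> S \<noteq> {} \<Longrightarrow>
      \<exists>w\<in>S. card (neighbors S E w) + card (c0 ` neighbors P E w) \<le> 2"
  shows "\<exists>c. three_colouring (W \<union> P) E c \<and> (\<forall>v\<in>P. c v = c0 v)"
  using assms(1,3) degenerate
proof (induction W rule: finite_remove_induct)
  case empty
  then show ?case using assms(4) by auto
next
  case (remove W)
  obtain w where w: "w \<in> W" "card (neighbors W E w) + card (c0 ` neighbors P E w) \<le> 2"
    using remove.prems(2) remove.hyps(2) by blast
  obtain c where c: "three_colouring ((W - {w}) \<union> P) E c" "\<forall>v\<in>P. c v = c0 v"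
    using remove.IH[OF w(1)] remove.prems by blast
  have "w \<notin> P" using remove.prems(1) w(1) by auto
  define F where "F = c ` neighbors (W - {w}) E w \<union> c0 ` neighbors P E w"
  have "c ` neighbors ((W - {w}) \<union> P) E w \<subseteq> F"
    using c(2) unfolding F_def neighbors_def by auto
  moreover have "card F \<le> card (c ` neighbors (W - {w}) E w) + card (c0 ` neighbors P E w)"
    unfolding F_def by (rule card_Un_le)
  moreover have "card (c ` neighbors (W - {w}) E w) \<le> card (neighbors W E w)"
  proof -
    have "card (c ` neighbors (W - {w}) E w) \<le> card (neighbors (W - {w}) E w)"
      using remove.hyps(1) unfolding neighbors_def by (intro card_image_le) simp
    also have "\<dots> \<le> card (neighbors W E w)"
      using remove.hyps(1) unfolding neighbors_def by (intro card_mono) auto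
    finally show ?thesis .
  qed
  moreover have "finite F" unfolding F_def neighbors_def using remove.hyps(1) assms(2) by auto
  ultimately obtain k where "three_colouring (insert w ((W - {w}) \<union> P)) E (c(w := k))"
    using three_colouring_insert[OF c(1) assms(5)] \<open>w \<notin> P\<close> w(2) by fastforce
  moreover have "insert w ((W - {w}) \<union> P) = W \<union> P" using w(1) by blast
  ultimately show ?case using c(2) \<open>w \<notin> P\<close> by auto
qed

lemma degenerate_three_colouring:
  assumes "finite U" "sym_irrefl E" "\<forall>v\<in>U. card (neighbors U E v) \<le> 3"
    and "\<And>S. adj_closed U E S \<Longrightarrow> S \<noteq> {} \<Longrightarrow> \<exists>w\<in>S. card (neighbors U E w) \<le> 2"
  shows "\<exists>c. three_colouring U E c"
proof -
  have "\<exists>c. three_colouring (U \<union> {}) E c \<and> (\<forall>v\<in>{}. c v = (\<lambda>_. 0) v)"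
  proof (rule greedy_three_colouring)
    fix S assume S: "S \<subseteq> U" "S \<noteq> {}"
    show "\<exists>w\<in>S. card (neighbors S E w) + card ((\<lambda>_. 0) ` neighbors {} E w) \<le> 2"
    proof (cases "adj_closed U E S")
      case True
      then obtain w where w: "w \<in> S" "card (neighbors U E w) \<le> 2" using assms(4) S(2) by blast
      have "card (neighbors S E w) \<le> card (neighbors U E w)"
        using S(1) assms(1) unfolding neighbors_def by (intro card_mono) auto
      then show ?thesis using w by (intro bexI[of _ w]) (auto simp: neighbors_def)
    next
      case False
      then obtain s u where su: "s \<in> S" "u \<in> U" "E s u" "u \<notin> S"
        using S(1) unfolding adj_closed_def by blast
      have "neighbors S E s \<subset> neighbors U E s" using su S(1) unfolding neighbors_def by auto
      then have "card (neighbors S E s) < card (neighbors U E s)"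
        using assms(1) unfolding neighbors_def by (simp add: psubset_card_mono)
      then show ?thesis using su(1) S(1) assms(3) by (force simp: neighbors_def)
    qed
  qed (use assms in \<open>auto simp: three_colouring_def\<close>)
  then show ?thesis by auto
qed

text \<open>Every component of \<open>G[U]\<close> contains a vertex that lost a neighbour outside \<open>U\<close>.\<close>
lemma proper_subgraph_three_colouring:
  assumes "finite V" "sym_irrefl E" "\<forall>v\<in>V. card (neighbors V E v) \<le> 3" "connected_on V E"
    and "U \<subseteq> V" "U \<noteq> V"
  shows "\<exists>c. three_colouring U E c"
proof (rule degenerate_three_colouring)
  show "finite U" using assms(1,5) by (rule finite_subset[rotated])
  have mono: "card (neighbors U E v) \<le> card (neighbors V E v)" for v
    using assms(1,5) unfolding neighbors_def by (intro card_mono) auto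
  then show "\<forall>v\<in>U. card (neighbors U E v) \<le> 3" using assms(3,5) by (meson le_trans subsetD)
  fix S assume S: "adj_closed U E S" "S \<noteq> {}"
  show "\<exists>w\<in>S. card (neighbors U E w) \<le> 2"
  proof (rule ccontr)
    assume full: "\<not> ?thesis"
    have "neighbors U E s = neighbors V E s" if "s \<in> S" for s
    proof (rule card_subset_eq)
      show "finite (neighbors V E s)" using assms(1) unfolding neighbors_def by simp
      show "neighbors U E s \<subseteq> neighbors V E s" using assms(5) unfolding neighbors_def by auto
      show "card (neighbors U E s) = card (neighbors V E s)"
        using full that mono[of s] assms(3,5) S(1) unfolding adj_closed_def by force
    qed
    then have "adj_closed V E S" using S(1) assms(5) unfolding adj_closed_def neighbors_def by blast
    then have "S = V" using assms(4) S(2) unfolding connected_on_def by blast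
    then show False using S(1) assms(5,6) unfolding adj_closed_def by blast
  qed
qed (use assms in auto)

lemma less_3_cases: "(k::nat) < 3 \<longleftrightarrow> k = 0 \<or> k = 1 \<or> k = 2" by auto

lemma colour_permutation:
  fixes a b a' b' :: nat
  assumes "a < 3" "b < 3" "a' < 3" "b' < 3" "a = b \<longleftrightarrow> a' = b'"
  shows "\<exists>f. (\<forall>k<3. f k < 3) \<and> (\<forall>k<3. \<forall>l<3. f k = f l \<longrightarrow> k = l) \<and> f a = a' \<and> f b = b'"
proof (cases "a = b")
  case True
  define f where "f k = (if k = a then a' else if k = a' then a else k)" for k
  show ?thesis using assms True by (intro exI[of _ f]) (auto simp: f_def)
next
  case False
  \<comment> \<open>\<open>3 - a' - b'\<close> is the colour different from \<open>a'\<close> and \<open>b'\<close>\<close>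
  define f where "f k = (if k = a then a' else if k = b then b' else 3 - a' - b')" for k
  show ?thesis
    using assms False unfolding less_3_cases by (intro exI[of _ f]) (auto simp: f_def)
qed

text \<open>The colours of \<open>c2\<close> are permuted to agree with \<open>c1\<close> on \<open>U1 \<inter> U2\<close>; the case
  \<open>x = y\<close> glues along a single vertex.\<close>
lemma three_colouring_glue:
  assumes c1: "three_colouring U1 E c1" and c2: "three_colouring U2 E c2"
    and cap: "U1 \<inter> U2 = {x, y}" and same: "c1 x = c1 y \<longleftrightarrow> c2 x = c2 y"
    and no_edges: "\<And>u v. u \<in> U1 - U2 \<Longrightarrow> v \<in> U2 - U1 \<Longrightarrow> \<not> E u v \<and> \<not> E v u"
  shows "\<exists>c. three_colouring (U1 \<union> U2) E c"
proof -
  have "x \<in> U1" "y \<in> U1" "x \<in> U2" "y \<in> U2" using cap by auto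
  then have "c2 x < 3" "c2 y < 3" "c1 x < 3" "c1 y < 3"
    using c1 c2 unfolding three_colouring_def by auto
  then obtain f where f: "\<forall>k<3. f k < 3" "\<forall>k<3. \<forall>l<3. f k = f l \<longrightarrow> k = l"
    "f (c2 x) = c1 x" "f (c2 y) = c1 y"
    using colour_permutation[OF _ _ _ _ same[symmetric]] by blast
  have agree: "c1 v = f (c2 v)" if "v \<in> U1 \<inter> U2" for v using that cap f(3,4) by auto
  define c where "c v = (if v \<in> U1 then c1 v else f (c2 v))" for v
  have "three_colouring (U1 \<union> U2) E c"
    unfolding three_colouring_def
  proof (intro conjI ballI impI)
    fix v assume "v \<in> U1 \<union> U2"
    then show "c v < 3" using c1 c2 f(1) unfolding c_def three_colouring_def by auto
  next
    fix u v assume uv: "u \<in> U1 \<union> U2" "v \<in> U1 \<union> U2" "E u v"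
    have "\<not> (u \<in> U1 - U2 \<and> v \<in> U2 - U1)" "\<not> (v \<in> U1 - U2 \<and> u \<in> U2 - U1)"
      using no_edges uv(3) by blast+
    then consider "u \<in> U1" "v \<in> U1" | "u \<in> U2" "v \<in> U2"
      using uv(1,2) by blast
    then show "c u \<noteq> c v"
    proof cases
      case 1
      then show ?thesis using c1 uv(3) unfolding c_def three_colouring_def by auto
    next
      case 2
      then have "c u = f (c2 u)" "c v = f (c2 v)" using agree unfolding c_def by auto
      moreover have "c2 u \<noteq> c2 v" "c2 u < 3" "c2 v < 3"
        using c2 2 uv(3) unfolding three_colouring_def by auto
      ultimately show ?thesis using f(2) by metis
    qed
  qed
  then show ?thesis by blast
qed

section \<open>Brooks' theorem for cubic graphs\<close>

locale connected_cubic =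
  fixes V :: "'a set" and E :: "'a \<Rightarrow> 'a \<Rightarrow> bool"
  assumes finite_V: "finite V" and sym_irrefl: "sym_irrefl E"
    and degree_3: "\<And>v. v \<in> V \<Longrightarrow> card (neighbors V E v) = 3"
    and connected: "connected_on V E"
begin

lemma sym: "E a b \<Longrightarrow> E b a" and irrefl: "\<not> E a a"
  using sym_irrefl unfolding sym_irrefl_def by auto

lemma adj_closed_eq_V: "adj_closed V E S \<Longrightarrow> S \<noteq> {} \<Longrightarrow> S = V"
  using connected unfolding connected_on_def by blast

text \<open>A side of the non-adjacent pair \<open>x\<close>, \<open>y\<close> is a union of components of \<open>G - {x, y}\<close>.
  Its side graph is \<open>G[A \<union> {x, y}]\<close> with the extra edge \<open>xy\<close>.\<close>
definition side :: "'a \<Rightarrow> 'a \<Rightarrow> 'a set \<Rightarrow> bool" where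
  "side x y A \<longleftrightarrow> x \<in> V \<and> y \<in> V \<and> x \<noteq> y \<and> \<not> E x y \<and> A \<subseteq> V - {x, y} \<and>
     (\<forall>a\<in>A. \<forall>u\<in>V. E a u \<longrightarrow> u \<in> A \<union> {x, y})"

definition separates :: "'a \<Rightarrow> 'a \<Rightarrow> 'a set \<Rightarrow> 'a set \<Rightarrow> bool" where
  "separates x y A B \<longleftrightarrow> side x y A \<and> side x y B \<and> A \<inter> B = {} \<and> V = A \<union> B \<union> {x, y}"

lemma side_swap: "side x y A \<Longrightarrow> side y x A"
  unfolding side_def using sym by blast

lemma separates_swap_vertices: "separates x y A B \<Longrightarrow> separates y x A B"
  unfolding separates_def using side_swap by blast

lemma separates_swap_sides: "separates x y A B \<Longrightarrow> separates x y B A"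
  unfolding separates_def by blast

lemma side_finite: "side x y A \<Longrightarrow> finite A"
  unfolding side_def using finite_V by (meson finite_Diff finite_subset)

lemma side_no_proper_closed:
  assumes A: "side x y A" and "S \<subseteq> A" and S: "adj_closed (A \<union> {x, y}) (add_edge E x y) S"
  shows "S = {}"
proof -
  have "adj_closed V E S" unfolding adj_closed_def
  proof (intro conjI ballI impI)
    show "S \<subseteq> V" using A \<open>S \<subseteq> A\<close> unfolding side_def by blast
    fix s u assume "s \<in> S" "u \<in> V" "E s u"
    moreover have "u \<in> A \<union> {x, y}" using A \<open>S \<subseteq> A\<close> calculation unfolding side_def by blast
    ultimately show "u \<in> S" using S unfolding adj_closed_def add_edge_def by blast
  qed
  moreover have "x \<notin> S" "x \<in> V" using A \<open>S \<subseteq> A\<close> unfolding side_def by blast+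
  ultimately show ?thesis using adj_closed_eq_V by blast
qed

lemma side_graph_connected:
  assumes A: "side x y A" and T: "adj_closed (A \<union> {x, y}) (add_edge E x y) T" "T \<noteq> {}"
  shows "x \<in> T" "y \<in> T" "T = A \<union> {x, y}"
proof -
  have T_sub: "T \<subseteq> A \<union> {x, y}" using T(1) unfolding adj_closed_def by blast
  have "\<not> T \<subseteq> A" using side_no_proper_closed[OF A _ T(1)] T(2) by blast
  then have "x \<in> T \<or> y \<in> T" using T_sub by blast
  moreover have "add_edge E x y x y" "add_edge E x y y x" unfolding add_edge_def by simp_all
  ultimately show xT: "x \<in> T" and yT: "y \<in> T" using T(1) unfolding adj_closed_def by blast+
  have "x \<noteq> y" using A unfolding side_def by blast
  then have "adj_closed (A \<union> {x, y}) (add_edge E x y) (A \<union> {x, y} - T)"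
    by (intro adj_closed_Diff sym_irrefl_add_edge sym_irrefl T(1))
  moreover have "A \<union> {x, y} - T \<subseteq> A" using xT yT by blast
  ultimately have "A \<union> {x, y} - T = {}" using side_no_proper_closed[OF A] by blast
  then show "T = A \<union> {x, y}" using T_sub by (simp add: Diff_eq_empty_iff subset_antisym)
qed

lemma side_neighbors:
  assumes "side x y A"
  shows "neighbors (A \<union> {x, y}) (add_edge E x y) x = insert y (neighbors A E x)"
    and "a \<in> A \<Longrightarrow> neighbors (A \<union> {x, y}) (add_edge E x y) a = neighbors V E a"
  using assms irrefl unfolding side_def add_edge_def neighbors_def by auto

lemma side_degree:
  assumes "side x y A"
  shows "card (neighbors (A \<union> {x, y}) (add_edge E x y) x) = Suc (card (neighbors A E x))"
    and "a \<in> A \<Longrightarrow> card (neighbors (A \<union> {x, y}) (add_edge E x y) a) = 3"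
proof -
  have "y \<notin> neighbors A E x" "finite (neighbors A E x)"
    using assms side_finite[OF assms] unfolding side_def neighbors_def by auto
  then show "card (neighbors (A \<union> {x, y}) (add_edge E x y) x) = Suc (card (neighbors A E x))"
    using side_neighbors(1)[OF assms] by simp
  show "a \<in> A \<Longrightarrow> card (neighbors (A \<union> {x, y}) (add_edge E x y) a) = 3"
    using side_neighbors(2)[OF assms] degree_3 assms unfolding side_def by auto
qed

lemma side_three_colouring:
  assumes "side x y A" "card (neighbors A E x) \<le> 2" "card (neighbors A E y) \<le> 2"
    and "card (neighbors A E x) \<le> 1 \<or> card (neighbors A E y) \<le> 1"
  shows "\<exists>c. three_colouring (A \<union> {x, y}) (add_edge E x y) c"
proof (rule degenerate_three_colouring)
  show "finite (A \<union> {x, y})" using side_finite[OF assms(1)] by simp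
  show "sym_irrefl (add_edge E x y)"
    using sym_irrefl_add_edge[OF sym_irrefl] assms(1) unfolding side_def by blast
  show "\<forall>v\<in>A \<union> {x, y}. card (neighbors (A \<union> {x, y}) (add_edge E x y) v) \<le> 3"
    using side_degree[OF assms(1)] side_degree[OF side_swap[OF assms(1)]] assms(2,3)
    by (auto simp: insert_commute add_edge_commute)
  fix S assume "adj_closed (A \<union> {x, y}) (add_edge E x y) S" "S \<noteq> {}"
  then have "x \<in> S" "y \<in> S" using side_graph_connected[OF assms(1)] by blast+
  moreover have "card (neighbors (A \<union> {x, y}) (add_edge E x y) x) \<le> 2 \<or>
      card (neighbors (A \<union> {x, y}) (add_edge E x y) y) \<le> 2"
    using side_degree(1)[OF assms(1)] side_degree(1)[OF side_swap[OF assms(1)]] assms(4)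
    by (auto simp: insert_commute add_edge_commute)
  ultimately show "\<exists>w\<in>S. card (neighbors (A \<union> {x, y}) (add_edge E x y) w) \<le> 2" by blast
qed

lemma side_connected_cubic:
  assumes "side x y A" "card (neighbors A E x) = 2" "card (neighbors A E y) = 2"
  shows "connected_cubic (A \<union> {x, y}) (add_edge E x y)"
proof
  show "finite (A \<union> {x, y})" using side_finite[OF assms(1)] by simp
  show "sym_irrefl (add_edge E x y)"
    using sym_irrefl_add_edge[OF sym_irrefl] assms(1) unfolding side_def by blast
  show "card (neighbors (A \<union> {x, y}) (add_edge E x y) v) = 3" if "v \<in> A \<union> {x, y}" for v
    using that side_degree[OF assms(1)] side_degree[OF side_swap[OF assms(1)]] assms(2,3)
    by (auto simp: insert_commute add_edge_commute)
  show "connected_on (A \<union> {x, y}) (add_edge E x y)"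
    using side_graph_connected[OF assms(1)] unfolding connected_on_def by blast
qed

lemma side_K4_card:
  assumes "side x y A" "is_K4 (add_edge E x y) (A \<union> {x, y})"
  shows "card A = 2"
proof -
  have "x \<noteq> y" "x \<notin> A" "y \<notin> A" using assms(1) unfolding side_def by auto
  then have "card (A \<union> {x, y}) = card A + 2" using side_finite[OF assms(1)] by simp
  then show ?thesis using assms(2) unfolding is_K4_def by simp
qed

lemma separates_degree:
  assumes "separates x y A B"
  shows "card (neighbors A E x) + card (neighbors B E x) = 3"
proof -
  have V: "V = A \<union> B \<union> {x, y}" and AB: "A \<inter> B = {}" and "x \<in> V" "\<not> E x y"
    using assms unfolding separates_def side_def by blast+
  have "finite A" "finite B" using assms side_finite unfolding separates_def by blast+
  moreover have "neighbors V E x = neighbors A E x \<union> neighbors B E x"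
    using V \<open>\<not> E x y\<close> irrefl unfolding neighbors_def by auto
  moreover have "neighbors A E x \<inter> neighbors B E x = {}"
    using AB unfolding neighbors_def by blast
  ultimately show ?thesis
    using degree_3[OF \<open>x \<in> V\<close>] by (simp add: card_Un_disjoint neighbors_def)
qed

lemma separates_glue:
  assumes sep: "separates x y A B"
    and c1: "three_colouring (A \<union> {x, y}) (add_edge E x y) c1"
    and c2: "three_colouring (B \<union> {x, y}) (add_edge E x y) c2"
  shows "\<exists>c. three_colouring V E c"
proof -
  have A: "side x y A" and B: "side x y B" and AB: "A \<inter> B = {}" and V: "V = A \<union> B \<union> {x, y}"
    using sep unfolding separates_def by blast+
  have "\<exists>c. three_colouring ((A \<union> {x, y}) \<union> (B \<union> {x, y})) E c"
  proof (rule three_colouring_glue)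
    show "three_colouring (A \<union> {x, y}) E c1" "three_colouring (B \<union> {x, y}) E c2"
      using three_colouring_add_edge(1)[OF c1] three_colouring_add_edge(1)[OF c2] .
    show "(A \<union> {x, y}) \<inter> (B \<union> {x, y}) = {x, y}" using AB by blast
    show "c1 x = c1 y \<longleftrightarrow> c2 x = c2 y"
      using three_colouring_add_edge(2)[OF c1] three_colouring_add_edge(2)[OF c2] by blast
    fix u v assume "u \<in> A \<union> {x, y} - (B \<union> {x, y})" "v \<in> B \<union> {x, y} - (A \<union> {x, y})"
    then have "u \<in> A" "v \<in> B" "u \<in> V" "v \<in> V" "v \<notin> A \<union> {x, y}" "u \<notin> B \<union> {x, y}"
      using V by blast+
    then show "\<not> E u v \<and> \<not> E v u" using A B unfolding side_def by blast
  qed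
  then show ?thesis using V by (simp add: Un_absorb Un_left_commute Un_assoc sup_commute)
qed

lemma degree_le_3: "\<forall>v\<in>V. card (neighbors V E v) \<le> 3"
  using degree_3 by simp

lemma proper_subset_three_colouring: "U \<subseteq> V \<Longrightarrow> v \<in> V \<Longrightarrow> v \<notin> U \<Longrightarrow> \<exists>c. three_colouring U E c"
  using proper_subgraph_three_colouring[OF finite_V sym_irrefl degree_le_3 connected] by blast

lemma separates_cut_vertex_colouring:
  assumes sep: "separates x y A B" and "B \<noteq> {}" and x_B: "neighbors B E x = {}"
  shows "\<exists>c. three_colouring V E c"
proof -
  have A: "side x y A" and B: "side x y B" and AB: "A \<inter> B = {}" and V: "V = A \<union> B \<union> {x, y}"
    using sep unfolding separates_def by blast+
  have xy: "x \<noteq> y" "x \<notin> B" "y \<notin> B" using B unfolding side_def by blast+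
  obtain b where "b \<in> B" using \<open>B \<noteq> {}\<close> by blast
  then have "b \<in> V" "b \<notin> A \<union> {x, y}" "A \<union> {x, y} \<subseteq> V" using V AB xy by blast+
  then obtain c1 where c1: "three_colouring (A \<union> {x, y}) E c1"
    using proper_subset_three_colouring by blast
  have "x \<notin> B \<union> {y}" "x \<in> V" "B \<union> {y} \<subseteq> V" using xy V by blast+
  then obtain c2 where c2: "three_colouring (B \<union> {y}) E c2"
    using proper_subset_three_colouring by blast
  have "\<exists>c. three_colouring ((A \<union> {x, y}) \<union> (B \<union> {y})) E c"
  proof (rule three_colouring_glue[OF c1 c2])
    show "(A \<union> {x, y}) \<inter> (B \<union> {y}) = {y, y}" using AB xy by blast
    fix u v assume u: "u \<in> A \<union> {x, y} - (B \<union> {y})" and v: "v \<in> B \<union> {y} - (A \<union> {x, y})"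
    then have "v \<in> B" "v \<in> V" "v \<notin> A \<union> {x, y}" using V by blast+
    have "\<not> E x v" using x_B \<open>v \<in> B\<close> unfolding neighbors_def by blast
    moreover have "\<not> E a v" if "a \<in> A" for a using A that \<open>v \<in> V\<close> \<open>v \<notin> A \<union> {x, y}\<close>
      unfolding side_def by blast
    moreover have "u \<in> A \<or> u = x" using u by blast
    ultimately have "\<not> E u v" by blast
    then show "\<not> E u v \<and> \<not> E v u" using sym by blast
  qed simp
  moreover have "(A \<union> {x, y}) \<union> (B \<union> {y}) = V" using V by blast
  ultimately show ?thesis by simp
qed

lemma separates_pair_same_colour:
  assumes sep: "separates x y A B"
    and "card (neighbors B E x) \<le> 1" "card (neighbors B E y) \<le> 1"
  shows "\<exists>c. three_colouring (B \<union> {x, y}) E c \<and> c x = c y"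
proof -
  have B: "side x y B" and V: "V = A \<union> B \<union> {x, y}" using sep unfolding separates_def by blast+
  have xy: "x \<notin> B" "\<not> E x y" "x \<in> V" using B unfolding side_def by blast+
  have "B \<subseteq> V" using V by blast
  then obtain c where c: "three_colouring B E c"
    using proper_subset_three_colouring xy by blast
  define F where "F = c ` (neighbors B E x \<union> neighbors B E y)"
  have fin: "finite (neighbors B E x)" "finite (neighbors B E y)"
    using side_finite[OF B] unfolding neighbors_def by simp_all
  have "card F \<le> card (neighbors B E x \<union> neighbors B E y)"
    unfolding F_def using fin by (intro card_image_le) simp
  also have "\<dots> \<le> 2" using card_Un_le[of "neighbors B E x" "neighbors B E y"] assms(2,3) by linarith
  finally obtain k where k: "k < 3" "k \<notin> F"
    using free_colour[of F] fin unfolding F_def by blast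
  define c' where "c' v = (if v \<in> {x, y} then k else c v)" for v
  have "three_colouring (B \<union> {x, y}) E c'"
    unfolding three_colouring_def
  proof (intro conjI ballI impI)
    fix v assume "v \<in> B \<union> {x, y}"
    then show "c' v < 3" using c k unfolding c'_def three_colouring_def by auto
  next
    have clash: "c u \<noteq> k" if "u \<in> B" "E u w" "w \<in> {x, y}" for u w
      using that k(2) sym unfolding F_def neighbors_def by blast
    fix u v assume "u \<in> B \<union> {x, y}" "v \<in> B \<union> {x, y}" "E u v"
    then show "c' u \<noteq> c' v"
      using c clash[of u v] clash[of v u] sym xy irrefl
      unfolding c'_def three_colouring_def by (metis Un_iff insert_iff empty_iff)
  qed
  then show ?thesis unfolding c'_def by auto
qed

text \<open>After colouring \<open>B \<union> {x, y}\<close>, the at most two vertices of \<open>A\<close> see a single colour on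
  \<open>{x, y}\<close> and nothing else outside \<open>A\<close>, so they can be coloured greedily.\<close>
lemma separates_small_side_colouring:
  assumes sep: "separates x y A B" and "card A \<le> 2"
    and "card (neighbors B E x) \<le> 1" "card (neighbors B E y) \<le> 1"
  shows "\<exists>c. three_colouring V E c"
proof -
  have A: "side x y A" and B: "side x y B" and AB: "A \<inter> B = {}" and V: "V = A \<union> B \<union> {x, y}"
    using sep unfolding separates_def by blast+
  obtain c0 where c0: "three_colouring (B \<union> {x, y}) E c0" "c0 x = c0 y"
    using separates_pair_same_colour[OF sep assms(3,4)] by blast
  have "\<exists>c. three_colouring (A \<union> (B \<union> {x, y})) E c \<and> (\<forall>v\<in>B \<union> {x, y}. c v = c0 v)"
  proof (rule greedy_three_colouring[OF side_finite[OF A] _ _ c0(1) sym_irrefl])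
    show "finite (B \<union> {x, y})" using side_finite[OF B] by simp
    show "A \<inter> (B \<union> {x, y}) = {}" using AB A unfolding side_def by auto
    fix S assume S: "S \<subseteq> A" "S \<noteq> {}"
    then obtain w where w: "w \<in> S" by blast
    have "neighbors S E w \<subseteq> A - {w}" using S(1) irrefl unfolding neighbors_def by blast
    moreover have "card (A - {w}) \<le> 1"
      using assms(2) w S(1) side_finite[OF A] by (simp add: card_Diff_singleton subset_iff)
    ultimately have "card (neighbors S E w) \<le> 1"
      by (meson card_mono finite_Diff side_finite[OF A] le_trans)
    moreover have "neighbors (B \<union> {x, y}) E w \<subseteq> {x, y}"
      using A B AB w S(1) unfolding side_def neighbors_def by blast
    then have "c0 ` neighbors (B \<union> {x, y}) E w \<subseteq> {c0 x}" using c0(2) by auto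
    then have "card (c0 ` neighbors (B \<union> {x, y}) E w) \<le> card {c0 x}" by (intro card_mono) simp_all
    ultimately show "\<exists>w\<in>S. card (neighbors S E w) + card (c0 ` neighbors (B \<union> {x, y}) E w) \<le> 2"
      using w by (intro bexI[of _ w]) simp_all
  qed
  moreover have "A \<union> (B \<union> {x, y}) = V" using V by blast
  ultimately show ?thesis by auto
qed

lemma separates_balanced_side_colouring:
  assumes sep: "separates x y A B" and "B \<noteq> {}"
    and Ax: "card (neighbors A E x) = 2" and Ay: "card (neighbors A E y) = 2"
    and IH: "\<And>(U :: 'a set) E'. card U < card V \<Longrightarrow> connected_cubic U E' \<Longrightarrow> \<not> is_K4 E' U \<Longrightarrow>
      \<exists>c. three_colouring U E' c"
  shows "\<exists>c. three_colouring V E c"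
proof -
  have A: "side x y A" and B: "side x y B" and AB: "A \<inter> B = {}" and V: "V = A \<union> B \<union> {x, y}"
    using sep unfolding separates_def by blast+
  have Bx: "card (neighbors B E x) = 1" using separates_degree[OF sep] Ax by simp
  have By: "card (neighbors B E y) = 1"
    using separates_degree[OF separates_swap_vertices[OF sep]] Ay by simp
  show ?thesis
  proof (cases "is_K4 (add_edge E x y) (A \<union> {x, y})")
    case True
    then have "card A = 2" by (rule side_K4_card[OF A])
    then show ?thesis using separates_small_side_colouring[OF sep] Bx By by simp
  next
    case False
    obtain b where "b \<in> B" using \<open>B \<noteq> {}\<close> by blast
    then have "b \<in> V" "b \<notin> A \<union> {x, y}" using V AB B unfolding side_def by auto
    moreover have "A \<union> {x, y} \<subseteq> V" using V by blast
    ultimately have "A \<union> {x, y} \<subset> V" by blast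
    then have "card (A \<union> {x, y}) < card V" by (rule psubset_card_mono[OF finite_V])
    then obtain c1 where "three_colouring (A \<union> {x, y}) (add_edge E x y) c1"
      using IH[OF _ side_connected_cubic[OF A Ax Ay] False] by blast
    moreover obtain c2 where "three_colouring (B \<union> {x, y}) (add_edge E x y) c2"
      using side_three_colouring[OF B] Bx By by auto
    ultimately show ?thesis by (rule separates_glue[OF sep])
  qed
qed

lemma separates_degree_0_colouring:
  assumes sep: "separates x y A B" and "A \<noteq> {}" "B \<noteq> {}"
    and "card (neighbors A E x) = 0 \<or> card (neighbors A E y) = 0 \<or>
      card (neighbors B E x) = 0 \<or> card (neighbors B E y) = 0"
  shows "\<exists>c. three_colouring V E c"
proof -
  have "finite A" "finite B" using sep side_finite unfolding separates_def by blast+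
  then have fin: "finite (neighbors A E v)" "finite (neighbors B E v)" for v
    unfolding neighbors_def by simp_all
  note cut = separates_cut_vertex_colouring
  from assms(4) show ?thesis
    using fin cut[OF separates_swap_sides[OF sep] \<open>A \<noteq> {}\<close>]
      cut[OF separates_swap_vertices[OF separates_swap_sides[OF sep]] \<open>A \<noteq> {}\<close>]
      cut[OF sep \<open>B \<noteq> {}\<close>] cut[OF separates_swap_vertices[OF sep] \<open>B \<noteq> {}\<close>]
    by auto
qed

lemma separates_colouring:
  assumes sep: "separates x y A B" and "A \<noteq> {}" "B \<noteq> {}"
    and IH: "\<And>(U :: 'a set) E'. card U < card V \<Longrightarrow> connected_cubic U E' \<Longrightarrow> \<not> is_K4 E' U \<Longrightarrow>
      \<exists>c. three_colouring U E' c"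
  shows "\<exists>c. three_colouring V E c"
proof -
  have A: "side x y A" and B: "side x y B" using sep unfolding separates_def by blast+
  have "card (neighbors A E x) + card (neighbors B E x) = 3"
    "card (neighbors A E y) + card (neighbors B E y) = 3"
    using separates_degree[OF sep] separates_degree[OF separates_swap_vertices[OF sep]] .
  then consider "card (neighbors A E x) = 0 \<or> card (neighbors A E y) = 0 \<or>
      card (neighbors B E x) = 0 \<or> card (neighbors B E y) = 0"
    | "card (neighbors A E x) = 2" "card (neighbors A E y) = 2"
    | "card (neighbors B E x) = 2" "card (neighbors B E y) = 2"
    | "card (neighbors A E x) \<le> 2" "card (neighbors A E y) \<le> 2"
      "card (neighbors A E x) \<le> 1 \<or> card (neighbors A E y) \<le> 1"
      "card (neighbors B E x) \<le> 2" "card (neighbors B E y) \<le> 2"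
      "card (neighbors B E x) \<le> 1 \<or> card (neighbors B E y) \<le> 1"
    by linarith
  then show ?thesis
  proof cases
    case 1
    then show ?thesis by (rule separates_degree_0_colouring[OF sep assms(2,3)])
  next
    case 2
    then show ?thesis by (rule separates_balanced_side_colouring[OF sep \<open>B \<noteq> {}\<close> _ _ IH])
  next
    case 3
    then show ?thesis
      by (rule separates_balanced_side_colouring[OF separates_swap_sides[OF sep] \<open>A \<noteq> {}\<close> _ _ IH])
  next
    case 4
    obtain c1 where "three_colouring (A \<union> {x, y}) (add_edge E x y) c1"
      using side_three_colouring[OF A] 4 by blast
    moreover obtain c2 where "three_colouring (B \<union> {x, y}) (add_edge E x y) c2"
      using side_three_colouring[OF B] 4 by blast
    ultimately show ?thesis by (rule separates_glue[OF sep])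
  qed
qed

lemma adj_closed_separates:
  assumes "x \<in> V" "y \<in> V" "x \<noteq> y" "\<not> E x y" and K: "adj_closed (V - {x, y}) E K"
  shows "separates x y K (V - {x, y} - K)"
proof -
  have side: "side x y S" if "adj_closed (V - {x, y}) E S" for S
    using assms(1-4) that unfolding side_def adj_closed_def by blast
  have "adj_closed (V - {x, y}) E (V - {x, y} - K)" by (rule adj_closed_Diff[OF sym_irrefl K])
  moreover have "K \<subseteq> V - {x, y}" using K unfolding adj_closed_def by blast
  moreover have "x \<in> V" "y \<in> V" using assms by blast+
  ultimately show ?thesis using side K unfolding separates_def by blast
qed


lemma induced_path_exists:
  assumes "\<not> is_K4 E V" "V \<noteq> {}"
  shows "\<exists>z x y. z \<in> V \<and> x \<in> V \<and> y \<in> V \<and> E z x \<and> E z y \<and> x \<noteq> y \<and> \<not> E x y"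
proof (rule ccontr)
  assume "\<not> ?thesis"
  then have triangle: "E x y" if "z \<in> V" "x \<in> V" "y \<in> V" "E z x" "E z y" "x \<noteq> y" for z x y
    using that by blast
  obtain v where v: "v \<in> V" using assms(2) by blast
  define N where "N = neighbors V E v"
  have N: "card N = 3" "finite N" "v \<notin> N" "N \<subseteq> V"
    using degree_3[OF v] finite_V irrefl unfolding N_def neighbors_def by auto
  have nbs: "neighbors V E s = insert v (N - {s})" if s: "s \<in> N" for s
  proof -
    have "insert v (N - {s}) = neighbors V E s"
    proof (rule card_subset_eq)
      show "finite (neighbors V E s)" using finite_V unfolding neighbors_def by simp
      show "insert v (N - {s}) \<subseteq> neighbors V E s"
        using s v triangle[of v s] sym N(4) unfolding N_def neighbors_def by auto
      show "card (insert v (N - {s})) = card (neighbors V E s)"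
        using N s degree_3 by (simp add: subset_iff)
    qed
    then show ?thesis by simp
  qed
  have "adj_closed V E (insert v N)"
    using v N(4) nbs unfolding adj_closed_def N_def neighbors_def by blast
  then have "insert v N = V" using adj_closed_eq_V by blast
  moreover have "is_K4 E (insert v N)"
    unfolding is_K4_def
  proof (intro conjI ballI impI)
    show "card (insert v N) = 4" using N by simp
    fix a b assume "a \<in> insert v N" "b \<in> insert v N" "a \<noteq> b"
    then show "E a b" using triangle[of v a b] v sym N(4) unfolding N_def neighbors_def by blast
  qed
  ultimately show False using assms(1) by simp
qed

lemma card_neighbors_Un_le_2:
  assumes "S \<union> P \<subseteq> V" "S \<inter> P = {}" "s \<in> V" "u \<in> V" "u \<notin> S \<union> P" "E s u"
  shows "card (neighbors S E s) + card (neighbors P E s) \<le> 2"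
proof -
  have fin: "finite S" "finite P" using assms(1) finite_V by (auto intro: finite_subset)
  have "card (neighbors S E s) + card (neighbors P E s) = card (neighbors S E s \<union> neighbors P E s)"
    using fin assms(2) unfolding neighbors_def by (intro card_Un_disjoint[symmetric]) auto
  also have "\<dots> \<le> card (neighbors V E s - {u})"
    using assms finite_V unfolding neighbors_def by (intro card_mono) auto
  also have "\<dots> = 2" using assms(3,4,6) degree_3 unfolding neighbors_def by auto
  finally show ?thesis .
qed

text \<open>With \<open>x\<close>, \<open>y\<close> coloured alike, colour \<open>G - {x, y}\<close> greedily towards \<open>z\<close>: every vertex
  other than \<open>z\<close> still has an uncoloured neighbour, and \<open>z\<close> sees only two colours.\<close>
lemma nonseparating_pair_colouring:
  assumes "z \<in> V" "x \<in> V" "y \<in> V" "E z x" "E z y" "x \<noteq> y" "\<not> E x y"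
    and conn: "connected_on (V - {x, y}) E"
  shows "\<exists>c. three_colouring V E c"
proof -
  have z: "z \<in> V - {x, y}" using assms(1,4,5) irrefl by blast
  have P: "three_colouring {x, y} E (\<lambda>_. 0)"
    using assms(7) sym irrefl unfolding three_colouring_def by auto
  have const_image: "card ((\<lambda>_. 0::nat) ` X) \<le> 1" for X :: "'a set"
    by (simp add: image_constant_conv)
  have "\<exists>c. three_colouring ((V - {x, y}) \<union> {x, y}) E c \<and> (\<forall>v\<in>{x, y}. c v = 0)"
  proof (rule greedy_three_colouring[OF _ _ _ P sym_irrefl])
    show "finite (V - {x, y})" "finite {x, y}" "(V - {x, y}) \<inter> {x, y} = {}"
      using finite_V by auto
    fix S assume S: "S \<subseteq> V - {x, y}" "S \<noteq> {}"
    show "\<exists>w\<in>S. card (neighbors S E w) + card ((\<lambda>_. 0::nat) ` neighbors {x, y} E w) \<le> 2"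
    proof (cases "z \<in> S")
      case True
      have "neighbors S E z \<subseteq> neighbors V E z - {x, y}" using S(1) unfolding neighbors_def by blast
      then have "card (neighbors S E z) \<le> card (neighbors V E z - {x, y})"
        using finite_V unfolding neighbors_def by (intro card_mono) simp_all
      also have "\<dots> = 1"
        using assms degree_3[OF assms(1)] by (simp add: card_Diff_subset neighbors_def)
      finally have "card (neighbors S E z) + card ((\<lambda>_. 0::nat) ` neighbors {x, y} E z) \<le> 2"
        using const_image[of "neighbors {x, y} E z"] by linarith
      then show ?thesis using True by blast
    next
      case False
      then have "\<not> adj_closed (V - {x, y}) E S" using conn S(2) z unfolding connected_on_def by blast
      then obtain s u where su: "s \<in> S" "u \<in> V - {x, y}" "E s u" "u \<notin> S"
        using S(1) unfolding adj_closed_def by blast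
      then have "card (neighbors S E s) + card (neighbors {x, y} E s) \<le> 2"
        using S(1) assms(2,3) by (intro card_neighbors_Un_le_2) auto
      then show ?thesis
        using su(1) card_image_le[of "neighbors {x, y} E s" "\<lambda>_. 0::nat"]
        by (intro bexI[of _ s]) (simp_all add: neighbors_def)
    qed
  qed
  moreover have "(V - {x, y}) \<union> {x, y} = V" using assms(2,3) by blast
  ultimately show ?thesis by auto
qed

text \<open>Pick an induced path \<open>x z y\<close>. If \<open>G - {x, y}\<close>
  is connected, colour greedily towards \<open>z\<close>. Otherwise \<open>{x, y}\<close> splits \<open>G\<close> into two sides. If \<open>x\<close> or
  \<open>y\<close> has no neighbour on one side, it is a cut vertex; if both send two edges into a side, that
  side plus the edge \<open>xy\<close> is a smaller connected cubic graph (or \<open>K\<^sub>4\<close>); in the remaining cases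
  both side graphs are 2-degenerate.\<close>
lemma three_colouring_if_smaller:
  assumes "\<not> is_K4 E V"
    and IH: "\<And>(U :: 'a set) E'. card U < card V \<Longrightarrow> connected_cubic U E' \<Longrightarrow> \<not> is_K4 E' U \<Longrightarrow>
      \<exists>c. three_colouring U E' c"
  shows "\<exists>c. three_colouring V E c"
proof (cases "V = {}")
  case True
  then show ?thesis unfolding three_colouring_def by blast
next
  case False
  then obtain z x y where zxy: "z \<in> V" "x \<in> V" "y \<in> V" "E z x" "E z y" "x \<noteq> y" "\<not> E x y"
    using induced_path_exists assms(1) by blast
  then have z: "z \<in> V - {x, y}" using irrefl by blast
  then obtain K where K: "adj_closed (V - {x, y}) E K" "z \<in> K"
    and least: "\<And>S. adj_closed (V - {x, y}) E S \<Longrightarrow> z \<in> S \<Longrightarrow> K \<subseteq> S"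
    using adj_closed_hull[of z "V - {x, y}" E] by blast
  have sep: "separates x y K (V - {x, y} - K)"
    by (rule adj_closed_separates[OF zxy(2,3,6,7) K(1)])
  show ?thesis
  proof (cases "V - {x, y} - K = {}")
    case True
    then have "connected_on (V - {x, y}) E"
      using connected_on_if_hull_eq[OF sym_irrefl z] least by blast
    then show ?thesis using nonseparating_pair_colouring zxy by blast
  next
    case False
    then show ?thesis using separates_colouring[OF sep _ False IH] K(2) by blast
  qed
qed

end

theorem cubic_three_colouring:
  assumes "connected_cubic V E" "\<not> is_K4 E V"
  shows "\<exists>c. three_colouring V E c"
  using assms
proof (induction "card V" arbitrary: V E rule: less_induct)
  case less
  interpret connected_cubic V E by (rule less.prems(1))
  show ?case using three_colouring_if_smaller less.prems(2) less.hyps by blast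
qed

section \<open>Dissociation sets versus independent sets\<close>

definition degree_sum :: "'a set \<Rightarrow> ('a \<Rightarrow> 'a \<Rightarrow> bool) \<Rightarrow> nat" where
  "degree_sum R E = (\<Sum>v\<in>R. card (neighbors R E v))"

lemma card_neighbors_as_sum: "finite A \<Longrightarrow> card (neighbors A E v) = (\<Sum>u\<in>A. if E v u then 1 else 0)"
  unfolding neighbors_def by (simp add: sum.inter_filter[symmetric])

lemma sum_card_neighbors_swap:
  assumes "finite R" "finite D" "sym_irrefl E"
  shows "(\<Sum>v\<in>R. card (neighbors D E v)) = (\<Sum>u\<in>D. card (neighbors R E u))"
proof -
  have "E v u = E u v" for u v using assms(3) unfolding sym_irrefl_def by blast
  then show ?thesis
    using assms(1,2) sum.swap[of "\<lambda>v u. if E v u then 1 else (0::nat)" R D]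
    by (simp add: card_neighbors_as_sum)
qed

lemma card_neighbors_Un:
  assumes "finite R" "finite D" "R \<inter> D = {}"
  shows "card (neighbors (R \<union> D) E v) = card (neighbors R E v) + card (neighbors D E v)"
proof -
  have "neighbors (R \<union> D) E v = neighbors R E v \<union> neighbors D E v"
    unfolding neighbors_def by blast
  moreover have "neighbors R E v \<inter> neighbors D E v = {}" using assms(3) unfolding neighbors_def by blast
  ultimately show ?thesis using assms(1,2) by (simp add: card_Un_disjoint neighbors_def)
qed

lemma degree_sum_insert:
  assumes "finite R" "a \<notin> R" "sym_irrefl E"
  shows "degree_sum (insert a R) E = degree_sum R E + 2 * card (neighbors R E a)"
proof -
  have irr: "\<not> E a a" using assms(3) unfolding sym_irrefl_def by blast
  have "neighbors {a} E v = (if E v a then {a} else {})" for v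
    unfolding neighbors_def by auto
  then have a: "card (neighbors {a} E v) = (if E v a then 1 else 0)" for v by simp
  have "degree_sum (insert a R) E
      = card (neighbors (R \<union> {a}) E a) + (\<Sum>v\<in>R. card (neighbors (R \<union> {a}) E v))"
    unfolding degree_sum_def using assms(1,2) by simp
  also have "\<dots> = card (neighbors R E a) + (degree_sum R E + (\<Sum>v\<in>R. card (neighbors {a} E v)))"
    using assms(1,2) irr card_neighbors_Un[of R "{a}"]
    by (simp add: degree_sum_def sum.distrib a)
  also have "(\<Sum>v\<in>R. card (neighbors {a} E v)) = card (neighbors R E a)"
    using sum_card_neighbors_swap[OF assms(1) _ assms(3), of "{a}"] by simp
  finally show ?thesis by simp
qed

lemma degree_sum_even: "finite R \<Longrightarrow> sym_irrefl E \<Longrightarrow> even (degree_sum R E)"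
proof (induction R rule: finite_induct)
  case empty
  then show ?case unfolding degree_sum_def by simp
next
  case (insert a R)
  then show ?case using degree_sum_insert[of R a E] by simp
qed

text \<open>Deleting one end of an edge at a time leaves an independent set of size at least
  \<open>|R| - |E(G[R])|\<close>.\<close>
lemma independent_subset_exists:
  assumes "finite R" "sym_irrefl E"
  shows "\<exists>J\<subseteq>R. (\<forall>a\<in>J. \<forall>b\<in>J. \<not> E a b) \<and> 2 * card R \<le> 2 * card J + degree_sum R E"
  using assms(1)
proof (induction "card R" arbitrary: R rule: less_induct)
  case less
  show ?case
  proof (cases "\<exists>w\<in>R. neighbors R E w \<noteq> {}")
    case False
    then have "\<forall>a\<in>R. \<forall>b\<in>R. \<not> E a b" unfolding neighbors_def by auto
    then show ?thesis by (intro exI[of _ R]) simp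
  next
    case True
    then obtain w where w: "w \<in> R" "neighbors R E w \<noteq> {}" by blast
    have R: "R = insert w (R - {w})" "w \<notin> R - {w}" "finite (R - {w})"
      using w(1) less.prems by auto
    have "card (R - {w}) < card R" using less.prems w(1) by (rule card_Diff1_less)
    then obtain J where J: "J \<subseteq> R - {w}" "\<forall>a\<in>J. \<forall>b\<in>J. \<not> E a b"
      "2 * card (R - {w}) \<le> 2 * card J + degree_sum (R - {w}) E"
      using less.hyps[OF _ R(3)] by blast
    have "neighbors (R - {w}) E w = neighbors R E w"
      using assms(2) unfolding sym_irrefl_def neighbors_def by blast
    then have "card (neighbors (R - {w}) E w) \<ge> 1"
      using w(2) less.prems unfolding neighbors_def by (simp add: Suc_le_eq card_gt_0_iff)
    moreover have "degree_sum R E = degree_sum (R - {w}) E + 2 * card (neighbors (R - {w}) E w)"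
      using degree_sum_insert[OF R(3) R(2) assms(2)] R(1) by simp
    moreover have "card R = Suc (card (R - {w}))" using R(2,3) R(1) card_insert_disjoint by metis
    ultimately have "2 * card R \<le> 2 * card J + degree_sum R E" using J(3) by linarith
    then show ?thesis using J(1,2) by blast
  qed
qed

text \<open>Double counting the edges between a dissociation set \<open>D\<close> and its complement \<open>R\<close>
  (there are \<open>2|D| + i\<close> of them, where \<open>i\<close> counts the isolated vertices of \<open>G[D]\<close>) against
  the degree sum of \<open>G[R]\<close>.\<close>
lemma cubic_dissociation_count:
  assumes fin: "finite V" and si: "sym_irrefl E" and deg: "\<And>v. v \<in> V \<Longrightarrow> card (neighbors V E v) = 3"
    and D: "D \<subseteq> V" "\<forall>x\<in>D. card (neighbors D E x) \<le> 1"
    and J: "2 * card (V - D) \<le> 2 * card J + degree_sum (V - D) E"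
  shows "3 * card D + card {x\<in>D. neighbors D E x = {}} \<le> 2 * card J + card V"
proof -
  define R where "R = V - D"
  have fin': "finite R" "finite D" using fin D(1) unfolding R_def by (auto intro: finite_subset)
  have V: "V = R \<union> D" "R \<inter> D = {}" using D(1) unfolding R_def by blast+
  have split: "card (neighbors R E v) + card (neighbors D E v) = 3" if "v \<in> V" for v
    using deg[OF that] card_neighbors_Un[OF fin' V(2)] V(1) by simp
  define cross where "cross = (\<Sum>u\<in>D. card (neighbors R E u))"
  have "degree_sum R E + cross = (\<Sum>v\<in>R. card (neighbors R E v) + card (neighbors D E v))"
    unfolding degree_sum_def cross_def sum_card_neighbors_swap[OF fin' si, symmetric]
    by (simp add: sum.distrib)
  also have "\<dots> = 3 * card R" using split V(1) by simp
  moreover have "cross + (\<Sum>u\<in>D. card (neighbors D E u))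
      = (\<Sum>u\<in>D. card (neighbors R E u) + card (neighbors D E u))"
    unfolding cross_def by (simp add: sum.distrib)
  moreover have "\<dots> = 3 * card D" using split V(1) by simp
  moreover have "(\<Sum>u\<in>D. card (neighbors D E u)) + card {x\<in>D. neighbors D E x = {}} = card D"
  proof -
    have "card (neighbors D E u) + (if neighbors D E u = {} then 1 else 0) = 1" if "u \<in> D" for u
      using D(2) that fin'(2) unfolding neighbors_def by (auto simp: le_Suc_eq card_0_eq)
    moreover have "card {x\<in>D. neighbors D E x = {}} = (\<Sum>u\<in>D. if neighbors D E u = {} then 1 else 0)"
      using fin'(2) by (simp add: sum.inter_filter[symmetric])
    ultimately show ?thesis by (simp add: sum.distrib[symmetric])
  qed
  moreover have "card V = card R + card D" using V fin' by (simp add: card_Un_disjoint)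
  ultimately show ?thesis using J unfolding R_def by linarith
qed

lemma simple_graph_sym_irrefl: "simple_graph V E \<Longrightarrow> sym_irrefl E"
  unfolding simple_graph_def sym_irrefl_def by blast

lemma connected_graph_connected_on:
  assumes "connected_graph V E"
  shows "connected_on V E"
  unfolding connected_on_def
proof (intro allI impI)
  fix S assume S: "adj_closed V E S" "S \<noteq> {}"
  then obtain s where s: "s \<in> S" "s \<in> V" unfolding adj_closed_def by blast
  have "v \<in> S" if "v \<in> V" for v
  proof -
    have "(\<lambda>x y. x \<in> V \<and> y \<in> V \<and> E x y)\<^sup>*\<^sup>* s v"
      using assms s(2) that unfolding connected_graph_def by blast
    then show "v \<in> S"
    proof (induction rule: rtranclp_induct)
      case base
      then show ?case using s(1) .
    next
      case (step u w)
      then show ?case using S(1) unfolding adj_closed_def by blast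
    qed
  qed
  then show "S = V" using S(1) unfolding adj_closed_def by blast
qed

lemma connected_cubic_if_cubic:
  assumes "simple_graph V E" "connected_graph V E" "cubic V E"
  shows "connected_cubic V E"
proof
  show "finite V" using assms(1) unfolding simple_graph_def by blast
  show "sym_irrefl E" using assms(1) by (rule simple_graph_sym_irrefl)
  show "card (neighbors V E v) = 3" if "v \<in> V" for v using assms(3) that unfolding cubic_def by blast
  show "connected_on V E" using assms(2) by (rule connected_graph_connected_on)
qed

lemma independence_number_ge:
  assumes "finite V" "independent_set V E S"
  shows "card S \<le> independence_number V E"
proof -
  have "{S. independent_set V E S} \<subseteq> Pow V" unfolding independent_set_def by blast
  then have "finite (card ` {S. independent_set V E S})" using assms(1) by (meson finite_Pow_iff finite_imageI finite_subset)
  then show ?thesis using assms(2) unfolding independence_number_def by (simp add: Max_ge)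
qed

lemma diss_attained:
  assumes "finite V"
  obtains D where "dissociation_set V E D" "card D = diss V E"
proof -
  have "{D. dissociation_set V E D} \<subseteq> Pow V" unfolding dissociation_set_def by blast
  then have "finite (card ` {D. dissociation_set V E D})" using assms by (meson finite_Pow_iff finite_imageI finite_subset)
  moreover have "dissociation_set V E {}" unfolding dissociation_set_def by simp
  ultimately have "diss V E \<in> card ` {D. dissociation_set V E D}" unfolding diss_def by (intro Max_in) auto
  then show ?thesis using that by (auto simp: image_iff)
qed

lemma three_colouring_independence_number:
  assumes "finite V" "three_colouring V E c"
  shows "card V \<le> 3 * independence_number V E"
proof -
  define C where "C k = {v\<in>V. c v = k}" for k
  have "V = (\<Union>k<3. C k)" using assms(2) unfolding C_def three_colouring_def by blast
  then have "card V \<le> (\<Sum>k<3. card (C k))" by (metis card_UN_le finite_lessThan)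
  also have "\<dots> \<le> (\<Sum>k<(3::nat). independence_number V E)"
  proof (rule sum_mono)
    fix k
    have "independent_set V E (C k)" using assms(2) unfolding independent_set_def C_def three_colouring_def by blast
    then show "card (C k) \<le> independence_number V E" by (rule independence_number_ge[OF assms(1)])
  qed
  finally show ?thesis by simp
qed

lemma cubic_dissociation_bound:
  assumes "simple_graph V E" "cubic V E" "dissociation_set V E D"
  shows "3 * card D + card {x\<in>D. neighbors D E x = {}} \<le> 2 * independence_number V E + card V"
proof -
  have fin: "finite V" and si: "sym_irrefl E"
    using assms(1) simple_graph_sym_irrefl unfolding simple_graph_def by blast+
  obtain J where J: "J \<subseteq> V - D" "\<forall>a\<in>J. \<forall>b\<in>J. \<not> E a b"
    "2 * card (V - D) \<le> 2 * card J + degree_sum (V - D) E"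
    using independent_subset_exists[of "V - D" E] fin si by blast
  have "card J \<le> independence_number V E"
    using J(1,2) by (intro independence_number_ge[OF fin]) (auto simp: independent_set_def)
  moreover have "3 * card D + card {x\<in>D. neighbors D E x = {}} \<le> 2 * card J + card V"
  proof (rule cubic_dissociation_count[OF fin si _ _ _ J(3)])
    show "card (neighbors V E v) = 3" if "v \<in> V" for v using assms(2) that unfolding cubic_def by blast
    show "D \<subseteq> V" "\<forall>x\<in>D. card (neighbors D E x) \<le> 1"
      using assms(3) unfolding dissociation_set_def neighbors_def by blast+
  qed
  ultimately show ?thesis by linarith
qed

lemma dissociation_set_no_isolated:
  assumes "finite V" "dissociation_set V E D" "card {x\<in>D. neighbors D E x = {}} = 0" "x \<in> D"
  shows "card {y \<in> D. E x y} = 1"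
proof -
  have "finite D" using assms(1,2) unfolding dissociation_set_def by (blast intro: finite_subset)
  then have "card (neighbors D E x) \<noteq> 0" using assms(3,4) unfolding neighbors_def by simp
  moreover have "card (neighbors D E x) \<le> 1"
    using assms(2,4) unfolding dissociation_set_def neighbors_def by blast
  ultimately show ?thesis unfolding neighbors_def by linarith
qed

lemma cubic_card_even:
  assumes "simple_graph V E" "cubic V E"
  shows "even (card V)"
proof -
  have "degree_sum V E = 3 * card V" using assms(2) unfolding degree_sum_def cubic_def by simp
  moreover have "even (degree_sum V E)"
    using assms(1) simple_graph_sym_irrefl degree_sum_even unfolding simple_graph_def by blast
  ultimately show ?thesis by simp
qed

theorem mainTheorem2:
  fixes V :: "'a set" and E :: "'a \<Rightarrow> 'a \<Rightarrow> bool"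
  assumes "simple_graph V E" and "connected_graph V E" and "cubic V E"
    and "card V \<ge> 6"
    and "5 * independence_number V E = 3 * diss V E"
  shows "18 dvd card V \<and> 3 * independence_number V E = card V \<and>
         9 * diss V E = 5 * card V \<and>
         (\<forall>D. max_dissociation_set V E D \<longrightarrow> (\<forall>x\<in>D. card {y \<in> D. E x y} = 1))"
proof -
  have fin: "finite V" using assms(1) unfolding simple_graph_def by blast
  have "\<not> is_K4 E V" using assms(4) unfolding is_K4_def by simp
  then obtain c where "three_colouring V E c"
    using cubic_three_colouring connected_cubic_if_cubic[OF assms(1-3)] by blast
  then have lower: "card V \<le> 3 * independence_number V E"
    by (rule three_colouring_independence_number[OF fin])
  obtain D0 where D0: "dissociation_set V E D0" "card D0 = diss V E" using diss_attained[OF fin] .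
  then have "3 * diss V E \<le> 2 * independence_number V E + card V"
    using cubic_dissociation_bound[OF assms(1,3) D0(1)] by linarith
  then have alpha: "3 * independence_number V E = card V" using lower assms(5) by linarith
  then have diss: "9 * diss V E = 5 * card V" using assms(5) by linarith
  have "18 dvd card V" using cubic_card_even[OF assms(1,3)] alpha assms(5) by presburger
  moreover have "\<forall>x\<in>D. card {y \<in> D. E x y} = 1" if "max_dissociation_set V E D" for D
  proof -
    have D: "dissociation_set V E D" "card D = diss V E"
      using that unfolding max_dissociation_set_def by blast+
    then have "card {x\<in>D. neighbors D E x = {}} = 0"
      using cubic_dissociation_bound[OF assms(1,3) D(1)] alpha diss by linarith
    then show ?thesis using dissociation_set_no_isolated[OF fin D(1)] by blast
  qed
  ultimately show ?thesis using alpha diss by blast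
qed

end
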